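(* Let $u\in\{0,1,2\}^*$, $w\in\{0,1\}^*$ and $s\in\mathcal{S}$ be such that $|u|=|w|$ and $\mathrm{val}_{\mathcal{F}}(u)=\mathrm{val}_{\mathcal{F}}(ws)$. Then for every $a\in\{0,1,2\}$ there exist a unique $b\in\{0,1\}$ and a unique $t\in\mathcal{S}$ such that $\mathrm{val}_{\mathcal{F}}(ua)=\mathrm{val}_{\mathcal{F}}(wbt)$.
   Context: Fibonacci numbers: $F_0=1$, $F_1=2$, $F_n=F_{n-1}+F_{n-2}$ for $n\ge2$. For a word $w=w_{k-1}\cdots w_0$ over $\{0,1,2\}$ (digits indexed from the right), $\mathrm{val}_{\mathcal{F}}(w)=\sum_{i=0}^{k-1}w_iF_i$. $\mathcal{S}=\{000,001,010,100,101\}$, the set of binary words of length 3 with no two consecutive $1$'s. *)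

theory Defs
  imports Main
begin

fun FF :: "nat \<Rightarrow> nat" where
  "FF 0 = 1"
| "FF (Suc 0) = 2"
| "FF (Suc (Suc n)) = FF (Suc n) + FF n"

text \<open>Words are lists written left to right: the list [w_(k-1), ..., w_0];
  the last list element is the digit of index 0.\<close>
fun valF :: "nat list \<Rightarrow> nat" where
  "valF [] = 0"
| "valF (x # xs) = x * FF (length xs) + valF xs"

definition SS :: "nat list set" where
  "SS = {[0,0,0], [0,0,1], [0,1,0], [1,0,0], [1,0,1]}"

end

theory Submission
  imports Defs Complex_Main
begin

text \<open>Appending a letter a to u and the four letters b t to w adds, up to a common
  shift, the digit a on one side and 5 b + val t \<in> [0, 9] on the other; every number
  in [0, 9] is uniquely of the form 5 b + val t. So everything hinges on the excess
  D = val(u0) - val(w0000) lying in [0, 7], given that E = val u - val(w000) = val s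
  lies in [0, 4]. Appending letters a, b maps (E, D) to (D + a - 5b, E + D + 2a - 8b),
  an affine map whose linear part has eigenvalues \<phi> and 1 - \<phi>. The component
  D - \<phi> E along the contracting direction is multiplied by 1 - \<phi> and shifted by
  (2 - \<phi>) a + (5 \<phi> - 8) b, so it stays in the open interval (-1, 3/2); with
  0 \<le> E \<le> 4 this gives -1 < D < 8.\<close>

text \<open>valF_shift xs = valF (xs @ [0]) is the value of u0, w0 etc. in the sketch above.\<close>

fun valF_shift :: "nat list \<Rightarrow> nat" where
  "valF_shift [] = 0"
| "valF_shift (x # xs) = x * FF (Suc (length xs)) + valF_shift xs"

lemma valF_snoc: "valF (xs @ [d]) = valF_shift xs + d"
  by (induction xs) auto

lemma valF_shift_snoc: "valF_shift (xs @ [d]) = valF xs + valF_shift xs + 2 * d"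
  by (induction xs) (auto simp: algebra_simps)

lemma valF_append_length3:
  assumes "length t = 3"
  shows "valF (xs @ t) = valF xs + 2 * valF_shift xs + valF t"
proof -
  obtain x y z where "t = [x, y, z]"
    using assms by (auto simp: numeral_3_eq_3 length_Suc_conv)
  then have "xs @ t = ((xs @ [x]) @ [y]) @ [z]" by simp
  then show ?thesis
    unfolding \<open>t = [x, y, z]\<close> by (simp only: valF_snoc valF_shift_snoc) simp
qed

lemma valF_append_Cons_length3:
  assumes "length t = 3"
  shows "valF (xs @ [b] @ t) = 2 * valF xs + 3 * valF_shift xs + 5 * b + valF t"
  using valF_append_length3[OF assms, of "xs @ [b]"]
  by (simp add: valF_snoc valF_shift_snoc)

definition phi :: real where "phi = (1 + sqrt 5) / 2"

lemma phi_squared: "phi * phi = phi + 1"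
  unfolding phi_def by (simp add: field_simps)

lemma phi_bounds: "8/5 < phi" "phi < 13/8"
proof -
  have "11/5 < sqrt 5" by (rule real_less_rsqrt) (simp add: power2_eq_square)
  moreover have "sqrt 5 < 9/4" by (rule real_less_lsqrt) (simp_all add: power2_eq_square)
  ultimately show "8/5 < phi" "phi < 13/8" unfolding phi_def by simp_all
qed

definition golden_defect :: "nat list \<Rightarrow> nat list \<Rightarrow> real" where
  "golden_defect u w =
     (real (valF_shift u) - 2 * valF w - 3 * valF_shift w)
     - phi * (real (valF u) - valF w - 2 * valF_shift w)"

lemma golden_defect_snoc:
  "golden_defect (u @ [a]) (w @ [b])
     = (1 - phi) * golden_defect u w + (2 - phi) * a + (5 * phi - 8) * b"
proof -
  have "golden_defect (u @ [a]) (w @ [b])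
      - ((1 - phi) * golden_defect u w + (2 - phi) * a + (5 * phi - 8) * b)
      = (1 + phi - phi * phi) * (real (valF u) - valF w - 2 * valF_shift w)"
    unfolding golden_defect_def by (simp add: valF_snoc valF_shift_snoc algebra_simps)
  then show ?thesis
    using phi_squared by simp
qed

lemma golden_defect_bounds:
  assumes "length u = length w" "set u \<subseteq> {0, 1, 2}" "set w \<subseteq> {0, 1}"
  shows "-1 < golden_defect u w \<and> golden_defect u w < 3/2"
  using assms
proof (induction u w rule: rev_induct2)
  case 1
  then show ?case by (simp add: golden_defect_def)
next
  case 2
  then show ?case by simp
next
  case 3
  then show ?case by simp
next
  case (4 a u b w)
  define g where "g = golden_defect u w"
  have g: "-1 < g" "g < 3/2"
    using 4 by (simp_all add: g_def)
  have "(phi - 1) * g < (phi - 1) * (3/2)" "(phi - 1) * (-1) < (phi - 1) * g"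
    using g phi_bounds by (intro mult_strict_left_mono; simp)+
  moreover have "a \<in> {0, 1, 2}" "b \<in> {0, 1}"
    using "4.prems" by auto
  ultimately show ?case
    using phi_bounds unfolding golden_defect_snoc g_def[symmetric]
    by (auto simp: algebra_simps)
qed

lemma valF_shift_excess_bound:
  assumes "length u = length w" "set u \<subseteq> {0, 1, 2}" "set w \<subseteq> {0, 1}"
    and "valF u = valF w + 2 * valF_shift w + e" "e \<le> 4"
  obtains k where "valF_shift u = 2 * valF w + 3 * valF_shift w + k" "k \<le> 7"
proof -
  define d where "d = real (valF_shift u) - 2 * valF w - 3 * valF_shift w"
  have "golden_defect u w = d - phi * e"
    using assms(4) unfolding golden_defect_def d_def by simp
  moreover have "0 \<le> phi * e" "phi * e \<le> 13/8 * 4"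
    using phi_bounds assms(5) by (intro mult_nonneg_nonneg mult_mono; simp)+
  ultimately have "-1 < d" "d < 8"
    using golden_defect_bounds[OF assms(1-3)] by linarith+
  then show ?thesis
    using that[of "valF_shift u - (2 * valF w + 3 * valF_shift w)"] unfolding d_def by linarith
qed

lemma SS_length: "t \<in> SS \<Longrightarrow> length t = 3"
  unfolding SS_def by auto

lemma bij_betw_valF_SS: "bij_betw valF SS {0..4}"
  unfolding SS_def bij_betw_def by (auto simp: image_iff)

lemma unique_SS_digit_decomposition:
  assumes "N \<le> 9"
  shows "\<exists>!(b, t). b \<in> {0, 1::nat} \<and> t \<in> SS \<and> N = 5 * b + valF t"
proof (rule ex1I)
  define t where "t = inv_into SS valF (N mod 5)"
  have "N mod 5 \<in> {0..4}" by simp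
  then have "t \<in> SS" "valF t = N mod 5"
    using bij_betw_valF_SS unfolding t_def
    by (auto intro: inv_into_into f_inv_into_f simp: bij_betw_def)
  moreover have "N div 5 \<in> {0, 1}" using assms by auto
  ultimately show "case (N div 5, t) of (b, t) \<Rightarrow> b \<in> {0, 1} \<and> t \<in> SS \<and> N = 5 * b + valF t"
    by simp
  fix p assume "case p of (b, t') \<Rightarrow> b \<in> {0, 1::nat} \<and> t' \<in> SS \<and> N = 5 * b + valF t'"
  then obtain b t' where p: "p = (b, t')" "t' \<in> SS" "N = 5 * b + valF t'"
    by (cases p) auto
  then have "valF t' < 5"
    using bij_betw_apply[OF bij_betw_valF_SS] by fastforce
  then have "b = N div 5" "valF t' = valF t"
    using p(3) \<open>valF t = N mod 5\<close> by auto
  then show "p = (N div 5, t)"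
    using bij_betw_valF_SS p(1,2) \<open>t \<in> SS\<close> by (auto simp: bij_betw_def inj_on_def)
qed

theorem lemma5p3:
  fixes u w s :: "nat list"
  assumes "set u \<subseteq> {0,1,2}" and "set w \<subseteq> {0,1}" and "s \<in> SS"
    and "length u = length w" and "valF u = valF (w @ s)"
  shows "\<forall>a \<in> {0,1,2::nat}. \<exists>!(b, t). b \<in> {0,1::nat} \<and> t \<in> SS \<and>
           valF (u @ [a]) = valF (w @ [b] @ t)"
proof
  fix a :: nat assume "a \<in> {0, 1, 2}"
  have "valF u = valF w + 2 * valF_shift w + valF s" "valF s \<le> 4"
    using assms(3,5) valF_append_length3[OF SS_length] bij_betw_valF_SS
    by (auto simp: bij_betw_def)
  then obtain k where k: "valF_shift u = 2 * valF w + 3 * valF_shift w + k" "k \<le> 7"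
    using valF_shift_excess_bound assms(1,2,4) by metis
  have "t \<in> SS \<Longrightarrow> valF (u @ [a]) = valF (w @ [b] @ t) \<longleftrightarrow> k + a = 5 * b + valF t" for b t
    using valF_append_Cons_length3[OF SS_length] k(1) by (simp add: valF_snoc)
  then have "(\<lambda>(b, t). b \<in> {0, 1::nat} \<and> t \<in> SS \<and> valF (u @ [a]) = valF (w @ [b] @ t))
      = (\<lambda>(b, t). b \<in> {0, 1} \<and> t \<in> SS \<and> k + a = 5 * b + valF t)"
    by (auto simp: fun_eq_iff)
  moreover have "\<exists>!(b, t). b \<in> {0, 1::nat} \<and> t \<in> SS \<and> k + a = 5 * b + valF t"
    using \<open>a \<in> {0, 1, 2}\<close> k(2) by (intro unique_SS_digit_decomposition) auto
  ultimately show "\<exists>!(b, t). b \<in> {0, 1::nat} \<and> t \<in> SS \<and> valF (u @ [a]) = valF (w @ [b] @ t)"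
    by simp
qed

end
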